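(* Let $N\ge 1$, let $a_1,\dots,a_N>0$, $T_1,\dots,T_N\ge 0$ and $P_{\mathrm{tot}}>0$. For $P_i\ge 0$ let $r_i(P_i)=\log_2(1+a_iP_i)$, $J(\mathbf P)=\sum_{i=1}^N (r_i(P_i)-T_i)^2$, and $\bar P_i=(2^{T_i}-1)/a_i$. Consider the problem (P): minimize $J(\mathbf P)$ subject to $\sum_i P_i\le P_{\mathrm{tot}}$ and $P_i\ge 0$ for all $i$; let $J^*$ denote its optimal value. Let $c=\ln 2$. Say that $\lambda\ge 0$ is a KKT multiplier for the sum-power constraint at a feasible $\mathbf P$ if there exist $\mu_1,\dots,\mu_N\ge 0$ with $2(r_i(P_i)-T_i)\frac{a_i}{(1+a_iP_i)c}+\lambda-\mu_i=0$ and $\mu_iP_i=0$ for all $i$, and $\lambda(\sum_i P_i-P_{\mathrm{tot}})=0$. Then: (A) If $P_{\mathrm{tot}}\ge \sum_{i=1}^N \bar P_i$, then the optimal solution is $P_i^*=\bar P_i$ for all $i$, $J^*=0$, and $\sum_i P_i^*=\sum_i\bar P_i\le P_{\mathrm{tot}}$ (with strict inequality, i.e. the power constraint slack, whenever $P_{\mathrm{tot}}>\sum_i\bar P_i$). (B) If $P_{\mathrm{tot}}<\sum_{i=1}^N\bar P_i$, then every optimal solution $\mathbf P^*$ satisfies $\sum_i P_i^*=P_{\mathrm{tot}}$, $J^*>0$, and every KKT multiplier $\lambda^*$ for the sum-power constraint at $\mathbf P^*$ satisfies $\lambda^*>0$.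
   Context: The problem restricted to the domain $0\le P_i\le \bar P_i$ is a convex program with linear constraints satisfying Slater's condition, so the KKT conditions above characterize optimal solutions. *)

theory Defs
  imports Complex_Main
begin

text \<open>Channels are indexed by i < N (i.e. {0..<N}); power vectors are functions nat => real,
only their values on {..<N} matter.\<close>

definition rate :: "(nat \<Rightarrow> real) \<Rightarrow> (nat \<Rightarrow> real) \<Rightarrow> nat \<Rightarrow> real" where
  "rate a P i = log 2 (1 + a i * P i)"

definition Jcost :: "nat \<Rightarrow> (nat \<Rightarrow> real) \<Rightarrow> (nat \<Rightarrow> real) \<Rightarrow> (nat \<Rightarrow> real) \<Rightarrow> real" where
  "Jcost N a T P = (\<Sum>i<N. (rate a P i - T i)\<^sup>2)"

definition Pbar :: "(nat \<Rightarrow> real) \<Rightarrow> (nat \<Rightarrow> real) \<Rightarrow> nat \<Rightarrow> real" where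
  "Pbar a T i = (2 powr T i - 1) / a i"

definition feasible :: "nat \<Rightarrow> real \<Rightarrow> (nat \<Rightarrow> real) \<Rightarrow> bool" where
  "feasible N Ptot P \<longleftrightarrow> (\<Sum>i<N. P i) \<le> Ptot \<and> (\<forall>i<N. 0 \<le> P i)"

definition optimal :: "nat \<Rightarrow> (nat \<Rightarrow> real) \<Rightarrow> (nat \<Rightarrow> real) \<Rightarrow> real \<Rightarrow> (nat \<Rightarrow> real) \<Rightarrow> bool" where
  "optimal N a T Ptot P \<longleftrightarrow> feasible N Ptot P \<and>
     (\<forall>Q. feasible N Ptot Q \<longrightarrow> Jcost N a T P \<le> Jcost N a T Q)"

definition Jstar :: "nat \<Rightarrow> (nat \<Rightarrow> real) \<Rightarrow> (nat \<Rightarrow> real) \<Rightarrow> real \<Rightarrow> real" where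
  "Jstar N a T Ptot = Inf {Jcost N a T Q | Q. feasible N Ptot Q}"

definition kkt_multiplier ::
  "nat \<Rightarrow> (nat \<Rightarrow> real) \<Rightarrow> (nat \<Rightarrow> real) \<Rightarrow> real \<Rightarrow> (nat \<Rightarrow> real) \<Rightarrow> real \<Rightarrow> bool" where
  "kkt_multiplier N a T Ptot P lam \<longleftrightarrow> feasible N Ptot P \<and> 0 \<le> lam \<and>
     (\<exists>\<mu> :: nat \<Rightarrow> real. \<forall>i<N. 0 \<le> \<mu> i \<and>
        2 * (rate a P i - T i) * (a i / ((1 + a i * P i) * ln 2)) + lam - \<mu> i = 0 \<and>
        \<mu> i * P i = 0) \<and>
     lam * ((\<Sum>i<N. P i) - Ptot) = 0"

end

theory Submission
  imports Defs
begin

text \<open>Since \<open>P \<mapsto> rate a P i\<close> is strictly increasing with \<open>rate a P i = T i\<close> exactly at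
  \<open>P i = Pbar a T i\<close>, every term of \<open>Jcost\<close> vanishes at \<open>Pbar a T\<close>, which settles the case
  \<open>\<Sum>i. Pbar a T i \<le> Ptot\<close>. Otherwise every feasible vector leaves some channel below its
  target by at least the average shortfall \<open>\<delta> = (\<Sum>i. Pbar a T i - Ptot) / N\<close>, which bounds
  \<open>Jcost\<close> away from 0 uniformly. Raising a channel that is below its target strictly decreases
  \<open>Jcost\<close>, so an optimum spends all the power; and at a channel below its target the gradient
  term of the stationarity condition is negative, which forces \<open>lam = \<mu> i - (negative) > 0\<close>.\<close>

lemma rate_le_iff_le_Pbar:
  assumes "0 < a i" "0 \<le> P i"
  shows "rate a P i \<le> T i \<longleftrightarrow> P i \<le> Pbar a T i"
proof -
  have "0 < 1 + a i * P i" using assms by (simp add: add_pos_nonneg)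
  then have "rate a P i \<le> T i \<longleftrightarrow> 1 + a i * P i \<le> 2 powr T i"
    by (simp add: rate_def log_le_iff)
  also have "\<dots> \<longleftrightarrow> P i \<le> Pbar a T i"
    using assms by (auto simp: Pbar_def pos_le_divide_eq algebra_simps)
  finally show ?thesis .
qed

lemma rate_less_iff_less_Pbar:
  assumes "0 < a i" "0 \<le> P i"
  shows "rate a P i < T i \<longleftrightarrow> P i < Pbar a T i"
proof -
  have "0 < 1 + a i * P i" using assms by (simp add: add_pos_nonneg)
  then have "rate a P i < T i \<longleftrightarrow> 1 + a i * P i < 2 powr T i"
    by (simp add: rate_def log_less_iff)
  also have "\<dots> \<longleftrightarrow> P i < Pbar a T i"
    using assms by (auto simp: Pbar_def pos_less_divide_eq algebra_simps)
  finally show ?thesis .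
qed

lemma rate_eq_iff_Pbar:
  assumes "0 < a i" "0 \<le> P i"
  shows "rate a P i = T i \<longleftrightarrow> P i = Pbar a T i"
  using rate_le_iff_le_Pbar[of a i P T] rate_less_iff_less_Pbar[of a i P T] assms by auto

lemma rate_mono:
  assumes "0 < a i" "0 \<le> P i" "P i \<le> Q i"
  shows "rate a P i \<le> rate a Q i"
  using assms by (simp add: rate_def add_pos_nonneg)

lemma rate_strict_mono:
  assumes "0 < a i" "0 \<le> P i" "P i < Q i"
  shows "rate a P i < rate a Q i"
  using assms by (simp add: rate_def add_pos_nonneg)

lemma Pbar_nonneg:
  assumes "0 < a i" "0 \<le> T i"
  shows "0 \<le> Pbar a T i"
  using assms by (simp add: Pbar_def ge_one_powr_ge_zero)

lemma Jcost_nonneg: "0 \<le> Jcost N a T P"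
  by (simp add: Jcost_def sum_nonneg)

lemma Jcost_eq_0_iff:
  assumes "\<forall>i<N. 0 < a i" "\<forall>i<N. 0 \<le> P i"
  shows "Jcost N a T P = 0 \<longleftrightarrow> (\<forall>i<N. P i = Pbar a T i)"
proof -
  have "Jcost N a T P = 0 \<longleftrightarrow> (\<forall>i<N. rate a P i = T i)"
    unfolding Jcost_def by (subst sum_nonneg_eq_0_iff) auto
  also have "\<dots> \<longleftrightarrow> (\<forall>i<N. P i = Pbar a T i)"
    using assms rate_eq_iff_Pbar by blast
  finally show ?thesis .
qed

lemma Jstar_eq_Jcost_if_optimal:
  assumes "optimal N a T Ptot P"
  shows "Jstar N a T Ptot = Jcost N a T P"
  using assms unfolding Jstar_def optimal_def by (intro cInf_eq_minimum) auto

lemma Jstar_greatest: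
  assumes "feasible N Ptot Q0" "\<And>Q. feasible N Ptot Q \<Longrightarrow> m \<le> Jcost N a T Q"
  shows "m \<le> Jstar N a T Ptot"
  using assms unfolding Jstar_def by (intro cInf_greatest) auto

lemma feasible_zero: "0 \<le> Ptot \<Longrightarrow> feasible N Ptot (\<lambda>_. 0)"
  by (simp add: feasible_def)

lemma optimal_iff_eq_Pbar:
  assumes "\<forall>i<N. 0 < a i" "\<forall>i<N. 0 \<le> T i" "(\<Sum>i<N. Pbar a T i) \<le> Ptot"
  shows "optimal N a T Ptot P \<longleftrightarrow> (\<forall>i<N. P i = Pbar a T i)"
proof
  have Pbar_feasible: "feasible N Ptot (Pbar a T)"
    using assms by (simp add: feasible_def Pbar_nonneg)
  have "Jcost N a T (Pbar a T) = 0"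
    using assms by (simp add: Jcost_eq_0_iff Pbar_nonneg)
  moreover assume "optimal N a T Ptot P"
  ultimately have "Jcost N a T P = 0" and "\<forall>i<N. 0 \<le> P i"
    using Pbar_feasible Jcost_nonneg[of N a T P] by (auto simp: optimal_def feasible_def)
  then show "\<forall>i<N. P i = Pbar a T i"
    using assms(1) by (simp add: Jcost_eq_0_iff)
next
  assume P_eq: "\<forall>i<N. P i = Pbar a T i"
  then have "feasible N Ptot P"
    using assms by (simp add: feasible_def Pbar_nonneg)
  moreover have "Jcost N a T P = 0"
    using assms P_eq by (simp add: Jcost_eq_0_iff Pbar_nonneg)
  ultimately show "optimal N a T Ptot P"
    by (simp add: optimal_def Jcost_nonneg)
qed

lemma ex_gap_if_sum_gap:
  fixes f g :: "'a \<Rightarrow> real" and \<delta> :: real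
  assumes "finite A" "A \<noteq> {}" "sum f A + card A * \<delta> \<le> sum g A"
  shows "\<exists>i\<in>A. f i + \<delta> \<le> g i"
proof (rule ccontr)
  assume "\<not> ?thesis"
  then have "sum (\<lambda>i. f i + \<delta>) A > sum g A"
    using assms(1,2) by (intro sum_strict_mono) auto
  then show False using assms(3) by (simp add: sum.distrib)
qed

lemma feasible_ex_below_Pbar:
  assumes "feasible N Ptot P" "Ptot < (\<Sum>i<N. Pbar a T i)"
  shows "\<exists>i<N. P i < Pbar a T i"
proof (rule ccontr)
  assume "\<not> ?thesis"
  then have "(\<Sum>i<N. Pbar a T i) \<le> (\<Sum>i<N. P i)" by (intro sum_mono) auto
  then show False using assms by (simp add: feasible_def)
qed

lemma Jstar_pos:
  assumes "N \<ge> 1" "\<forall>i<N. 0 < a i" "0 \<le> Ptot" "Ptot < (\<Sum>i<N. Pbar a T i)"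
  shows "0 < Jstar N a T Ptot"
proof -
  define \<delta> where "\<delta> = ((\<Sum>i<N. Pbar a T i) - Ptot) / N"
  define P\<delta> where "P\<delta> = (\<lambda>j. Pbar a T j - \<delta>)"
  define I where "I = {i. i < N \<and> \<delta> \<le> Pbar a T i}"
  define m where "m = Min ((\<lambda>i. (rate a P\<delta> i - T i)\<^sup>2) ` I)"
  have "0 < \<delta>" using assms(1,4) by (simp add: \<delta>_def)
  have gap: "\<exists>i\<in>I. Q i + \<delta> \<le> Pbar a T i" if "feasible N Ptot Q" for Q
  proof -
    have "(\<Sum>i<N. Q i) + card {..<N} * \<delta> \<le> (\<Sum>i<N. Pbar a T i)"
      using that assms(1) by (simp add: feasible_def \<delta>_def)
    then obtain i where "i < N" "Q i + \<delta> \<le> Pbar a T i"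
      using ex_gap_if_sum_gap[where A="{..<N}" and f=Q and g="Pbar a T" and \<delta>=\<delta>] assms(1)
      by (auto simp: lessThan_empty_iff)
    moreover have "0 \<le> Q i" using that \<open>i < N\<close> by (simp add: feasible_def)
    ultimately show ?thesis by (auto simp: I_def)
  qed
  have below: "rate a P\<delta> i < T i" if "i \<in> I" for i
    using that \<open>0 < \<delta>\<close> assms(2) by (simp add: I_def P\<delta>_def rate_less_iff_less_Pbar)
  have "I \<noteq> {}" using gap[OF feasible_zero[OF assms(3)]] by auto
  moreover have "finite I" by (simp add: I_def)
  ultimately have "0 < m"
    unfolding m_def by (subst Min_gr_iff) (auto dest!: below)
  have "m \<le> Jcost N a T Q" if Q_feasible: "feasible N Ptot Q" for Q
  proof -
    obtain i where i: "i \<in> I" "Q i + \<delta> \<le> Pbar a T i" using gap Q_feasible by blast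
    have "0 \<le> Q i" using Q_feasible i(1) by (simp add: feasible_def I_def)
    then have "rate a Q i \<le> rate a P\<delta> i"
      using i assms(2) by (intro rate_mono) (auto simp: I_def P\<delta>_def)
    then have "(T i - rate a P\<delta> i)\<^sup>2 \<le> (T i - rate a Q i)\<^sup>2"
      using below[OF i(1)] by (intro power_mono) auto
    have "m \<le> (rate a P\<delta> i - T i)\<^sup>2"
      unfolding m_def using \<open>finite I\<close> i(1) by (intro Min_le) auto
    also have "\<dots> \<le> (rate a Q i - T i)\<^sup>2"
      using \<open>(T i - rate a P\<delta> i)\<^sup>2 \<le> (T i - rate a Q i)\<^sup>2\<close> by (simp add: power2_commute)
    also have "\<dots> \<le> Jcost N a T Q"
      unfolding Jcost_def using i(1) by (intro member_le_sum) (auto simp: I_def)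
    finally show ?thesis .
  qed
  then have "m \<le> Jstar N a T Ptot"
    using Jstar_greatest feasible_zero[OF assms(3)] by blast
  with \<open>0 < m\<close> show ?thesis by simp
qed

lemma optimal_sum_eq_Ptot:
  assumes "\<forall>i<N. 0 < a i" "Ptot < (\<Sum>i<N. Pbar a T i)" "optimal N a T Ptot P"
  shows "(\<Sum>i<N. P i) = Ptot"
proof (rule ccontr)
  assume "(\<Sum>i<N. P i) \<noteq> Ptot"
  moreover have P_feasible: "feasible N Ptot P" using assms(3) by (simp add: optimal_def)
  ultimately have slack: "(\<Sum>i<N. P i) < Ptot" by (simp add: feasible_def)
  obtain i where i: "i < N" "P i < Pbar a T i"
    using feasible_ex_below_Pbar[OF P_feasible assms(2)] by blast
  define \<epsilon> where "\<epsilon> = min (Pbar a T i - P i) (Ptot - (\<Sum>i<N. P i))"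
  define Q where "Q = (\<lambda>j. P j + (if j = i then \<epsilon> else 0))"
  have "0 < \<epsilon>" using i slack by (simp add: \<epsilon>_def)
  have "0 \<le> P i" using P_feasible i(1) by (simp add: feasible_def)
  have "(\<Sum>j<N. Q j) = (\<Sum>j<N. P j) + \<epsilon>" using i(1) by (simp add: Q_def sum.distrib)
  then have "feasible N Ptot Q"
    using P_feasible \<open>0 < \<epsilon>\<close> by (auto simp: feasible_def Q_def \<epsilon>_def)
  have "rate a P i < rate a Q i"
    using assms(1) i(1) \<open>0 \<le> P i\<close> \<open>0 < \<epsilon>\<close> by (intro rate_strict_mono) (auto simp: Q_def)
  moreover have "rate a Q i \<le> T i"
    using assms(1) i(1) \<open>0 \<le> P i\<close> \<open>0 < \<epsilon>\<close>
    by (subst rate_le_iff_le_Pbar) (auto simp: Q_def \<epsilon>_def)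
  ultimately have "(T i - rate a Q i)\<^sup>2 < (T i - rate a P i)\<^sup>2"
    by (intro power_strict_mono) auto
  then have "Jcost N a T Q < Jcost N a T P"
    unfolding Jcost_def using i(1)
    by (intro sum_strict_mono_ex1) (auto simp: Q_def rate_def power2_commute)
  with assms(3) \<open>feasible N Ptot Q\<close> show False by (auto simp: optimal_def)
qed

lemma kkt_multiplier_pos_if_below_Pbar:
  assumes "\<forall>i<N. 0 < a i" "kkt_multiplier N a T Ptot P lam" "i < N" "P i < Pbar a T i"
  shows "0 < lam"
proof -
  obtain \<mu> where "0 \<le> \<mu> i"
    and stationary: "2 * (rate a P i - T i) * (a i / ((1 + a i * P i) * ln 2)) + lam - \<mu> i = 0"
    using assms(2,3) unfolding kkt_multiplier_def by blast
  have "0 \<le> P i" "0 < a i" using assms(1-3) by (auto simp: kkt_multiplier_def feasible_def)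
  then have "2 * (rate a P i - T i) < 0" and "0 < a i / ((1 + a i * P i) * ln 2)"
    using assms(4) by (simp_all add: rate_less_iff_less_Pbar add_pos_nonneg)
  then have "2 * (rate a P i - T i) * (a i / ((1 + a i * P i) * ln 2)) < 0"
    by (rule mult_neg_pos)
  with stationary \<open>0 \<le> \<mu> i\<close> show ?thesis by linarith
qed

theorem theorem2:
  fixes N :: nat and a T :: "nat \<Rightarrow> real" and Ptot :: real
  assumes "N \<ge> 1"
    and "\<forall>i<N. 0 < a i"
    and "\<forall>i<N. 0 \<le> T i"
    and "0 < Ptot"
  shows "(Ptot \<ge> (\<Sum>i<N. Pbar a T i) \<longrightarrow>
            optimal N a T Ptot (Pbar a T) \<and>
            (\<forall>P. optimal N a T Ptot P \<longleftrightarrow> (\<forall>i<N. P i = Pbar a T i)) \<and>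
            Jstar N a T Ptot = 0 \<and>
            (\<Sum>i<N. Pbar a T i) \<le> Ptot \<and>
            (Ptot > (\<Sum>i<N. Pbar a T i) \<longrightarrow> (\<Sum>i<N. Pbar a T i) < Ptot))
       \<and> (Ptot < (\<Sum>i<N. Pbar a T i) \<longrightarrow>
            Jstar N a T Ptot > 0 \<and>
            (\<forall>P. optimal N a T Ptot P \<longrightarrow>
                 (\<Sum>i<N. P i) = Ptot \<and>
                 (\<forall>lam. kkt_multiplier N a T Ptot P lam \<longrightarrow> lam > 0)))"
proof (intro conjI impI allI)
  assume enough: "(\<Sum>i<N. Pbar a T i) \<le> Ptot"
  show optimal_Pbar: "optimal N a T Ptot (Pbar a T)"
    using optimal_iff_eq_Pbar[OF assms(2,3) enough] by blast
  show "optimal N a T Ptot P \<longleftrightarrow> (\<forall>i<N. P i = Pbar a T i)" for P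
    using optimal_iff_eq_Pbar[OF assms(2,3) enough] .
  show "Jstar N a T Ptot = 0"
    using Jstar_eq_Jcost_if_optimal[OF optimal_Pbar] assms(2,3)
    by (simp add: Jcost_eq_0_iff Pbar_nonneg)
next
  assume short: "Ptot < (\<Sum>i<N. Pbar a T i)"
  show "0 < Jstar N a T Ptot"
    using Jstar_pos assms short by simp
  fix P
  assume optimal: "optimal N a T Ptot P"
  then show "(\<Sum>i<N. P i) = Ptot"
    using optimal_sum_eq_Ptot assms(2) short by blast
  obtain i where "i < N" "P i < Pbar a T i"
    using feasible_ex_below_Pbar[of N Ptot P] optimal short unfolding optimal_def by blast
  then show "0 < lam" if "kkt_multiplier N a T Ptot P lam" for lam
    using kkt_multiplier_pos_if_below_Pbar assms(2) that by blast
qed simp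

end
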